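(* Let $\mathcal{X}$ be finite, $\mathcal{C}\subseteq\{\pm1\}^{\mathcal{X}}$ a concept class, and $\alpha\in(0,1)$. Suppose $\{\lambda_c\}_{c\in\mathcal{C}}$ and $\{\mu_c\}_{c\in\mathcal{C}}$ are families of distributions on $\mathcal{Z}=\mathcal{X}\times\{\pm1\}$ and $\pi$ is a distribution on $\mathcal{C}$ such that $$\Delta:=\mathbb{E}_{c\sim\pi}[L_{\lambda_c}(c)]>\frac{2\alpha}{1+\alpha},$$ and $L_{\mu_c}(c)=0$ for all $c\in\mathcal{C}$. Let $U\in\mathbb{R}^{\mathcal{C}\times\mathcal{Z}}$ have entries $u_{c,z}=\pi(c)(\lambda_c(z)-\mu_c(z))$. Then there exist families $\{\widetilde\lambda_c\}_{c\in\mathcal{C}}$, $\{\widetilde\mu_c\}_{c\in\mathcal{C}}$ of distributions on $\mathcal{Z}$ and a distribution $\widetilde\pi$ on $\mathcal{C}$ such that: 1. for all $c$ in the support of $\widetilde\pi$, $L_{\widetilde\lambda_c}(c)\ge \frac{C_0\,\alpha/(1+\alpha)}{\log((1+\alpha)/\alpha)}$, where $C_0>0$ is an absolute constant; 2. $L_{\widetilde\mu_c}(c)=0$ for all $c\in\mathcal{C}$; 3. the matrix $\widetilde U\in\mathbb{R}^{\mathcal{C}\times\mathcal{Z}}$ with entries $\widetilde u_{c,z}=\widetilde\pi(c)(\widetilde\lambda_c(z)-\widetilde\mu_c(z))$ satisfies $\gamma_2^*(\widetilde U)\le\frac{2\alpha\,\gamma_2^*(U)}{(1+\alpha)\Delt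a}$.
   Context: $L_{\mathcal{D}}(h)=\Pr_{(x,y)\sim\mathcal{D}}[h(x)\ne y]$. $\gamma_2(M)=\min\{\|R\|_{2\to\infty}\|A\|_{1\to2}:RA=M\}$ (max Euclidean row norm times max Euclidean column norm); $\gamma_2^*(N)=\max\{\sum_{i,j}m_{ij}n_{ij}:\gamma_2(M)\le1\}$ is its dual norm. *)

theory Defs
  imports Complex_Main
begin

definition is_distr :: "'a set \<Rightarrow> ('a \<Rightarrow> real) \<Rightarrow> bool" where
  "is_distr S p \<longleftrightarrow> (\<forall>z. 0 \<le> p z) \<and> (\<forall>z. z \<notin> S \<longrightarrow> p z = 0) \<and> sum p S = 1"

text \<open>Labels \<open>{\<plusminus>1}\<close> are encoded as bool (True = +1, False = -1).
  The sample space Z = X \<times> {\<plusminus>1}.\<close>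
definition sample_space :: "nat set \<Rightarrow> (nat \<times> bool) set" where
  "sample_space X = X \<times> (UNIV :: bool set)"

definition concepts :: "nat set \<Rightarrow> (nat \<Rightarrow> bool) set" where
  "concepts X = {c. \<forall>x. x \<notin> X \<longrightarrow> c x = False}"

definition loss :: "nat set \<Rightarrow> (nat \<times> bool \<Rightarrow> real) \<Rightarrow> (nat \<Rightarrow> bool) \<Rightarrow> real" where
  "loss X D h = (\<Sum>z\<in>sample_space X. if h (fst z) \<noteq> snd z then D z else 0)"

definition gamma2 :: "'r set \<Rightarrow> 'c set \<Rightarrow> ('r \<Rightarrow> 'c \<Rightarrow> real) \<Rightarrow> real" where
  "gamma2 Rw Cl M = Inf {Max (insert 0 ((\<lambda>i. sqrt (\<Sum>l<k. (R i l)^2)) ` Rw)) *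
                          Max (insert 0 ((\<lambda>j. sqrt (\<Sum>l<k. (A l j)^2)) ` Cl)) | (k::nat) R A.
                          \<forall>i\<in>Rw. \<forall>j\<in>Cl. M i j = (\<Sum>l<k. R i l * A l j)}"

definition gamma2_dual :: "'r set \<Rightarrow> 'c set \<Rightarrow> ('r \<Rightarrow> 'c \<Rightarrow> real) \<Rightarrow> real" where
  "gamma2_dual Rw Cl N = Sup {(\<Sum>i\<in>Rw. \<Sum>j\<in>Cl. M i j * N i j) | M. gamma2 Rw Cl (M :: 'r \<Rightarrow> 'c \<Rightarrow> real) \<le> 1}"

end

theory Submission
  imports Defs "HOL-Analysis.Convex"
begin

text \<open>Pick a dyadic threshold \<open>\<tau> = 2\<^sup>-\<^sup>j\<close>, \<open>j \<le> N \<approx> log\<^sub>2((1+\<alpha>)/\<alpha>)\<close>, such that the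
  \<open>\<pi>\<close>-mass \<open>Q\<close> of the concepts with loss at least \<open>\<tau>\<close> satisfies \<open>\<tau> Q \<ge> \<Delta>/(4N)\<close>; it exists
  because \<open>\<Delta> \<le> 2\<^sup>-\<^sup>N + 2 \<Sum>\<^sub>j 2\<^sup>-\<^sup>j Q\<^sub>j\<close>. Restrict \<open>\<pi>\<close> to those concepts and renormalise, and
  replace \<open>\<lambda>\<^sub>c\<close> by the mixture \<open>(1-t)\<mu>\<^sub>c + t\<lambda>\<^sub>c\<close> with \<open>t = K Q\<close>, \<open>K = 2\<alpha>/((1+\<alpha>)\<Delta>)\<close>. The
  new matrix is \<open>K\<close> times a row restriction of \<open>U\<close>, and restricting rows does not increase
  \<open>\<gamma>\<^sub>2\<close>, so \<open>\<gamma>\<^sub>2\<^sup>*\<close> is multiplied by at most \<open>K\<close>, while every remaining concept has loss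
  \<open>\<ge> t \<tau> \<ge> K \<Delta>/(4N)\<close>.\<close>

definition gamma2_costs :: "'r set \<Rightarrow> 'c set \<Rightarrow> ('r \<Rightarrow> 'c \<Rightarrow> real) \<Rightarrow> real set" where
  "gamma2_costs Rw Cl M = {Max (insert 0 ((\<lambda>i. sqrt (\<Sum>l<k. (R i l)^2)) ` Rw)) *
                          Max (insert 0 ((\<lambda>j. sqrt (\<Sum>l<k. (A l j)^2)) ` Cl)) | (k::nat) R A.
                          \<forall>i\<in>Rw. \<forall>j\<in>Cl. M i j = (\<Sum>l<k. R i l * A l j)}"

lemma gamma2_eq_Inf_costs: "gamma2 Rw Cl M = Inf (gamma2_costs Rw Cl M)"
  unfolding gamma2_def gamma2_costs_def by simp

lemma Max_insert_zero_nonneg: "finite S \<Longrightarrow> 0 \<le> Max (insert (0::real) (f ` S))"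
  by (simp add: Max_ge_iff)

lemma Max_insert_zero_upper: "finite S \<Longrightarrow> x \<in> S \<Longrightarrow> f x \<le> Max (insert (0::real) (f ` S))"
  by (simp add: Max_ge_iff)

lemma gamma2_costs_nonneg:
  "finite Rw \<Longrightarrow> finite Cl \<Longrightarrow> x \<in> gamma2_costs Rw Cl M \<Longrightarrow> 0 \<le> x"
  unfolding gamma2_costs_def using Max_insert_zero_nonneg by (auto intro!: mult_nonneg_nonneg)

lemma bdd_below_gamma2_costs:
  "finite Rw \<Longrightarrow> finite Cl \<Longrightarrow> bdd_below (gamma2_costs Rw Cl M)"
  using gamma2_costs_nonneg by (meson bdd_belowI)

lemma gamma2_costs_nonempty:
  assumes "finite Cl"
  shows "gamma2_costs Rw Cl M \<noteq> {}"
proof -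
  obtain f where f: "bij_betw f {0..<card Cl} Cl"
    using ex_bij_betw_nat_finite[OF assms] by blast
  define R where "R i l = M i (f l)" for i l
  define A where "A l j = (if f l = j then 1 else (0::real))" for l j
  have "M i j = (\<Sum>l<card Cl. R i l * A l j)" if "j \<in> Cl" for i j
  proof -
    have "(\<Sum>l<card Cl. R i l * A l j)
        = (\<Sum>l\<in>{0..<card Cl}. (\<lambda>j'. M i j' * (if j' = j then 1 else 0)) (f l))"
      unfolding R_def A_def by (simp add: lessThan_atLeast0)
    also have "\<dots> = (\<Sum>j'\<in>Cl. M i j' * (if j' = j then 1 else 0))"
      by (rule sum.reindex_bij_betw[OF f])
    also have "\<dots> = M i j"
      using that assms by (simp add: if_distrib cong: if_cong)
    finally show ?thesis by simp
  qed
  then show ?thesis unfolding gamma2_costs_def by blast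
qed

lemma abs_le_gamma2:
  assumes fin: "finite Rw" "finite Cl" and ij: "i \<in> Rw" "j \<in> Cl"
  shows "\<bar>M i j\<bar> \<le> gamma2 Rw Cl M"
  unfolding gamma2_eq_Inf_costs
proof (rule cInf_greatest[OF gamma2_costs_nonempty[OF fin(2)]])
  fix x assume "x \<in> gamma2_costs Rw Cl M"
  then obtain k :: nat and R A where
    x: "x = Max (insert 0 ((\<lambda>i. sqrt (\<Sum>l<k. (R i l)^2)) ` Rw)) *
            Max (insert 0 ((\<lambda>j. sqrt (\<Sum>l<k. (A l j)^2)) ` Cl))"
    and fac: "\<forall>i\<in>Rw. \<forall>j\<in>Cl. M i j = (\<Sum>l<k. R i l * A l j)"
    unfolding gamma2_costs_def by blast
  have "\<bar>M i j\<bar>^2 \<le> (\<Sum>l<k. (R i l)^2) * (\<Sum>l<k. (A l j)^2)"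
    using fac ij Cauchy_Schwarz_ineq_sum[of "\<lambda>l. R i l" "\<lambda>l. A l j" "{..<k}"] by simp
  then have "\<bar>M i j\<bar> \<le> sqrt (\<Sum>l<k. (R i l)^2) * sqrt (\<Sum>l<k. (A l j)^2)"
    by (metis real_sqrt_abs real_sqrt_le_mono real_sqrt_mult abs_abs)
  also have "\<dots> \<le> x"
    unfolding x
    by (intro mult_mono Max_insert_zero_upper Max_insert_zero_nonneg fin ij sum_nonneg
        real_sqrt_ge_zero) simp
  finally show "\<bar>M i j\<bar> \<le> x" .
qed

lemma gamma2_restrict_rows_le:
  assumes fin: "finite Rw" "finite Cl"
  shows "gamma2 Rw Cl (\<lambda>i j. if d i then M i j else 0) \<le> gamma2 Rw Cl M"
  unfolding gamma2_eq_Inf_costs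
proof (rule cInf_mono[OF gamma2_costs_nonempty[OF fin(2)] bdd_below_gamma2_costs[OF fin]])
  fix b assume "b \<in> gamma2_costs Rw Cl M"
  then obtain k :: nat and R A where
    b: "b = Max (insert 0 ((\<lambda>i. sqrt (\<Sum>l<k. (R i l)^2)) ` Rw)) *
            Max (insert 0 ((\<lambda>j. sqrt (\<Sum>l<k. (A l j)^2)) ` Cl))"
    and fac: "\<forall>i\<in>Rw. \<forall>j\<in>Cl. M i j = (\<Sum>l<k. R i l * A l j)"
    unfolding gamma2_costs_def by blast
  define R' where "R' i l = (if d i then R i l else 0)" for i l
  let ?a = "Max (insert 0 ((\<lambda>i. sqrt (\<Sum>l<k. (R' i l)^2)) ` Rw)) *
            Max (insert 0 ((\<lambda>j. sqrt (\<Sum>l<k. (A l j)^2)) ` Cl))"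
  have "?a \<in> gamma2_costs Rw Cl (\<lambda>i j. if d i then M i j else 0)"
    unfolding gamma2_costs_def using fac
    by (intro CollectI exI[of _ k] exI[of _ R'] exI[of _ A] conjI refl) (auto simp: R'_def)
  moreover have "?a \<le> b"
    unfolding b
  proof (intro mult_right_mono Max_insert_zero_nonneg fin)
    have "sqrt (\<Sum>l<k. (R' i l)^2) \<le> Max (insert 0 ((\<lambda>i. sqrt (\<Sum>l<k. (R i l)^2)) ` Rw))"
      if "i \<in> Rw" for i
      using Max_insert_zero_upper[OF fin(1) that] Max_insert_zero_nonneg[OF fin(1)]
      by (cases "d i") (simp_all add: R'_def)
    then show "Max (insert 0 ((\<lambda>i. sqrt (\<Sum>l<k. (R' i l)^2)) ` Rw))
        \<le> Max (insert 0 ((\<lambda>i. sqrt (\<Sum>l<k. (R i l)^2)) ` Rw))"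
      using fin(1) Max_insert_zero_nonneg[OF fin(1)] by (simp add: Max_le_iff)
  qed
  ultimately show "\<exists>a\<in>gamma2_costs Rw Cl (\<lambda>i j. if d i then M i j else 0). a \<le> b" by blast
qed

lemma gamma2_zero:
  assumes "finite Rw" "finite Cl"
  shows "gamma2 Rw Cl (\<lambda>i j. 0) = 0"
  unfolding gamma2_eq_Inf_costs
proof (rule cInf_eq_minimum)
  have e: "insert (0::real) ((\<lambda>x. 0) ` S) = {0}" for S :: "'x set" by auto
  show "0 \<in> gamma2_costs Rw Cl (\<lambda>i j. 0)"
    unfolding gamma2_costs_def
    by (intro CollectI exI[of _ "0::nat"] exI[of _ "\<lambda>i l. 0::real"] exI[of _ "\<lambda>l j. 0::real"])
      (simp only: lessThan_0 sum.empty real_sqrt_zero e Max_singleton mult_zero_left, simp)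
qed (use gamma2_costs_nonneg assms in blast)

lemma bdd_above_gamma2_dual_set:
  assumes fin: "finite Rw" "finite Cl"
  shows "bdd_above {(\<Sum>i\<in>Rw. \<Sum>j\<in>Cl. M i j * N i j) | M. gamma2 Rw Cl M \<le> 1}"
proof (rule bdd_aboveI, clarify)
  fix M :: "'a \<Rightarrow> 'b \<Rightarrow> real" assume g: "gamma2 Rw Cl M \<le> 1"
  show "(\<Sum>i\<in>Rw. \<Sum>j\<in>Cl. M i j * N i j) \<le> (\<Sum>i\<in>Rw. \<Sum>j\<in>Cl. \<bar>N i j\<bar>)"
  proof (intro sum_mono)
    fix i j assume "i \<in> Rw" "j \<in> Cl"
    then have "\<bar>M i j\<bar> \<le> 1" using abs_le_gamma2[OF fin] g by (meson order_trans)
    then have "\<bar>M i j * N i j\<bar> \<le> \<bar>N i j\<bar>" by (simp add: abs_mult mult_left_le_one_le)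
    then show "M i j * N i j \<le> \<bar>N i j\<bar>" by simp
  qed
qed

lemma gamma2_dual_restrict_rows_scale_le:
  assumes fin: "finite Rw" "finite Cl" and K: "0 \<le> K"
  shows "gamma2_dual Rw Cl (\<lambda>i j. if d i then K * N i j else 0) \<le> K * gamma2_dual Rw Cl N"
  unfolding gamma2_dual_def
proof (rule cSup_least)
  show "{\<Sum>i\<in>Rw. \<Sum>j\<in>Cl. M i j * (if d i then K * N i j else 0) |M. gamma2 Rw Cl M \<le> 1} \<noteq> {}"
  proof -
    have "gamma2 Rw Cl (\<lambda>i j. 0) \<le> 1" using gamma2_zero[OF fin] by simp
    then show ?thesis by blast
  qed
next
  fix x
  assume "x \<in> {\<Sum>i\<in>Rw. \<Sum>j\<in>Cl. M i j * (if d i then K * N i j else 0) |M. gamma2 Rw Cl M \<le> 1}"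
  then obtain M where x: "x = (\<Sum>i\<in>Rw. \<Sum>j\<in>Cl. M i j * (if d i then K * N i j else 0))"
    and g: "gamma2 Rw Cl M \<le> 1" by blast
  define M' where "M' = (\<lambda>i j. if d i then M i j else 0)"
  have g': "gamma2 Rw Cl M' \<le> 1"
    using gamma2_restrict_rows_le[OF fin, of d M] g unfolding M'_def by linarith
  have "x = K * (\<Sum>i\<in>Rw. \<Sum>j\<in>Cl. M' i j * N i j)"
    unfolding x M'_def sum_distrib_left by (intro sum.cong refl) auto
  also have "\<dots> \<le> K * Sup {(\<Sum>i\<in>Rw. \<Sum>j\<in>Cl. M i j * N i j) | M. gamma2 Rw Cl M \<le> 1}"
    using g' by (intro mult_left_mono[OF cSup_upper[OF _ bdd_above_gamma2_dual_set[OF fin]] K]) blast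
  finally show "x \<le> K * Sup {(\<Sum>i\<in>Rw. \<Sum>j\<in>Cl. M i j * N i j) | M. gamma2 Rw Cl M \<le> 1}" .
qed

lemma finite_concepts: "finite X \<Longrightarrow> finite (concepts X)"
proof -
  assume "finite X"
  have "concepts X \<subseteq> (\<lambda>S x. x \<in> S) ` Pow X"
  proof
    fix c assume "c \<in> concepts X"
    then have "{x. c x} \<subseteq> X" unfolding concepts_def by auto
    moreover have "c = (\<lambda>x. x \<in> {x. c x})" by auto
    ultimately show "c \<in> (\<lambda>S x. x \<in> S) ` Pow X" by blast
  qed
  with \<open>finite X\<close> show ?thesis using finite_subset by blast
qed

lemma finite_sample_space: "finite X \<Longrightarrow> finite (sample_space X)"
  unfolding sample_space_def by simp

lemma loss_nonneg: "is_distr (sample_space X) D \<Longrightarrow> 0 \<le> loss X D c"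
  unfolding loss_def is_distr_def by (intro sum_nonneg) auto

lemma loss_le_one:
  assumes "is_distr (sample_space X) D"
  shows "loss X D c \<le> 1"
proof -
  have "loss X D c \<le> sum D (sample_space X)"
    unfolding loss_def using assms by (intro sum_mono) (auto simp: is_distr_def)
  then show ?thesis using assms by (simp add: is_distr_def)
qed

lemma loss_linear:
  "loss X (\<lambda>z. a * D1 z + b * D2 z) c = a * loss X D1 c + b * loss X D2 c"
  unfolding loss_def sum_distrib_left sum.distrib[symmetric] by (intro sum.cong) auto

lemma is_distr_mixture:
  assumes "is_distr S p" "is_distr S q" "0 \<le> t" "t \<le> 1"
  shows "is_distr S (\<lambda>z. (1 - t) * p z + t * q z)"
  using assms unfolding is_distr_def by (simp add: sum.distrib sum_distrib_left[symmetric])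

lemma is_distr_restrict_normalize:
  assumes "is_distr C \<pi>" and Q: "Q = (\<Sum>c\<in>C. if P c then \<pi> c else 0)" "0 < Q"
  shows "is_distr C (\<lambda>c. if c \<in> C \<and> P c then \<pi> c / Q else 0)"
  unfolding is_distr_def
proof (intro conjI allI impI)
  have "(\<Sum>c\<in>C. if c \<in> C \<and> P c then \<pi> c / Q else 0) = (\<Sum>c\<in>C. (if P c then \<pi> c else 0) / Q)"
    by (intro sum.cong) auto
  also have "\<dots> = 1"
    using Q by (simp add: sum_divide_distrib[symmetric])
  finally show "(\<Sum>c\<in>C. if c \<in> C \<and> P c then \<pi> c / Q else 0) = 1" .
qed (use assms in \<open>auto simp: is_distr_def\<close>)

lemma le_dyadic_levels:
  fixes L :: real
  assumes "0 \<le> L" "L \<le> 1"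
  shows "L \<le> (1/2)^N + (\<Sum>j\<in>{1..N}. if (1/2)^j \<le> L then 2 * (1/2)^j else 0)"
proof (induction N)
  case 0
  then show ?case using assms by simp
next
  case (Suc N)
  let ?S = "\<lambda>n. \<Sum>j\<in>{1..n}. if (1/2::real)^j \<le> L then 2 * (1/2::real)^j else 0"
  show ?case
  proof (cases "(1/2::real)^(Suc N) \<le> L")
    case True
    then have "?S (Suc N) = ?S N + (1/2)^N" by (simp add: sum.cl_ivl_Suc)
    moreover have "0 \<le> (1/2::real)^Suc N" by simp
    ultimately show ?thesis using Suc.IH by linarith
  next
    case False
    then have "?S (Suc N) = ?S N" by (simp add: sum.cl_ivl_Suc)
    moreover have "0 \<le> ?S N" by (rule sum_nonneg) auto
    ultimately show ?thesis using False by linarith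
  qed
qed

lemma exists_heavy_dyadic_level:
  fixes \<pi> L :: "'a \<Rightarrow> real"
  assumes fin: "finite C" and \<pi>: "\<forall>c\<in>C. 0 \<le> \<pi> c" "sum \<pi> C = 1"
    and L: "\<forall>c\<in>C. 0 \<le> L c \<and> L c \<le> 1" and N: "1 \<le> N"
    and small: "(1/2)^N \<le> (\<Sum>c\<in>C. \<pi> c * L c) / 2"
  shows "\<exists>j\<in>{1..N}. (\<Sum>c\<in>C. \<pi> c * L c) / (4 * real N)
                      \<le> (1/2)^j * (\<Sum>c\<in>C. if (1/2)^j \<le> L c then \<pi> c else 0)"
proof (rule ccontr)
  define D where "D = (\<Sum>c\<in>C. \<pi> c * L c)"
  define Q where "Q j = (\<Sum>c\<in>C. if (1/2::real)^j \<le> L c then \<pi> c else 0)" for j :: nat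
  assume "\<not> ?thesis"
  then have light: "(1/2)^j * Q j < D / (4 * real N)" if "j \<in> {1..N}" for j
    using that unfolding D_def Q_def by (auto simp: not_le)
  have "D \<le> (\<Sum>c\<in>C. \<pi> c * ((1/2)^N + (\<Sum>j\<in>{1..N}. if (1/2)^j \<le> L c then 2 * (1/2)^j else 0)))"
    unfolding D_def by (rule sum_mono) (use \<pi> L le_dyadic_levels in \<open>auto intro: mult_left_mono\<close>)
  also have "\<dots> = (1/2)^N * sum \<pi> C
      + (\<Sum>c\<in>C. \<Sum>j\<in>{1..N}. \<pi> c * (if (1/2)^j \<le> L c then 2 * (1/2)^j else 0))"
    by (simp add: algebra_simps sum.distrib sum_distrib_left sum_distrib_right)
  also have "(\<Sum>c\<in>C. \<Sum>j\<in>{1..N}. \<pi> c * (if (1/2::real)^j \<le> L c then 2 * (1/2)^j else 0))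
      = (\<Sum>j\<in>{1..N}. 2 * ((1/2)^j * Q j))"
    unfolding Q_def sum.swap[of _ C] sum_distrib_left by (intro sum.cong refl) auto
  also have "(\<Sum>j\<in>{1..N}. 2 * ((1/2::real)^j * Q j)) < (\<Sum>j\<in>{1..N}. 2 * (D / (4 * real N)))"
  proof (rule sum_strict_mono)
    fix j assume "j \<in> {1..N}"
    then show "2 * ((1/2::real)^j * Q j) < 2 * (D / (4 * real N))"
      by (intro mult_strict_left_mono light) simp_all
  qed (use N in auto)
  also have "(\<Sum>j\<in>{1..N}. 2 * (D / (4 * real N))) = D / 2"
    using N by simp
  finally have "D < (1/2)^N + D / 2"
    using \<pi> by simp
  then show False
    using small unfolding D_def by simp
qed

lemma dyadic_depth_bounds:
  fixes x :: real
  assumes "2 < x"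
  defines "N \<equiv> nat \<lceil>ln x / ln 2\<rceil>"
  shows "1 \<le> N" "(1/2)^N \<le> 1 / x" "real N * ln 2 \<le> 2 * ln x"
proof -
  have ln2: "0 < ln (2::real)" by simp
  have "ln 2 < ln x" using assms by simp
  then have q: "1 < ln x / ln 2" using ln2 by simp
  have N_ge: "ln x / ln 2 \<le> real N" and N_le: "real N \<le> ln x / ln 2 + 1"
    unfolding N_def using q by linarith+
  show "1 \<le> N" using N_ge q by linarith
  show "real N * ln 2 \<le> 2 * ln x"
    using N_le q ln2 by (simp add: field_simps)
  have "ln x \<le> real N * ln 2" using N_ge ln2 by (simp add: field_simps)
  then have "exp (ln x) \<le> exp (real N * ln 2)" by simp
  also have "exp (real N * ln 2) = 2 ^ N"
    by (simp only: exp_of_nat_mult) simp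
  finally have "x \<le> 2 ^ N" using assms by simp
  then show "(1/2)^N \<le> 1 / x"
    using assms by (simp only: power_one_over) (simp add: frac_le)
qed

lemma exists_hard_threshold:
  fixes C :: "'a set" and \<pi> L :: "'a \<Rightarrow> real" and \<alpha> :: real
  defines "\<Delta> \<equiv> \<Sum>c\<in>C. \<pi> c * L c"
  assumes C: "finite C" and \<pi>: "is_distr C \<pi>" and L: "\<forall>c\<in>C. 0 \<le> L c \<and> L c \<le> 1"
    and \<alpha>: "0 < \<alpha>" "\<alpha> < 1" and hard: "2 * \<alpha> / (1 + \<alpha>) < \<Delta>"
  shows "\<exists>\<tau>. 0 < (\<Sum>c\<in>C. if \<tau> \<le> L c then \<pi> c else 0) \<and>
           (ln 2 / 4 * \<alpha> / (1 + \<alpha>)) / ln ((1 + \<alpha>) / \<alpha>)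
             \<le> 2 * \<alpha> / ((1 + \<alpha>) * \<Delta>) * \<tau> * (\<Sum>c\<in>C. if \<tau> \<le> L c then \<pi> c else 0)"
proof -
  define l where "l = ln ((1 + \<alpha>) / \<alpha>)"
  define N where "N = nat \<lceil>l / ln 2\<rceil>"
  have "2 < (1 + \<alpha>) / \<alpha>" using \<alpha> by (simp add: field_simps)
  from dyadic_depth_bounds[OF this]
  have N: "1 \<le> N" "(1/2)^N \<le> \<alpha> / (1 + \<alpha>)" "real N * ln 2 \<le> 2 * l"
    unfolding N_def l_def by simp_all
  have "0 < 2 * \<alpha> / (1 + \<alpha>)" using \<alpha> by simp
  then have \<Delta>_pos: "0 < \<Delta>" using hard by linarith
  have "\<alpha> / (1 + \<alpha>) = (2 * \<alpha> / (1 + \<alpha>)) / 2"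
    using \<alpha> by (simp add: field_simps)
  then have "(1/2)^N \<le> \<Delta> / 2" using hard N(2) by linarith
  then obtain j where "j \<in> {1..N}"
    and heavy: "\<Delta> / (4 * real N) \<le> (1/2)^j * (\<Sum>c\<in>C. if (1/2)^j \<le> L c then \<pi> c else 0)"
    using exists_heavy_dyadic_level[OF C _ _ L N(1)] \<pi> unfolding \<Delta>_def is_distr_def by blast
  define Q where "Q = (\<Sum>c\<in>C. if (1/2::real)^j \<le> L c then \<pi> c else 0)"
  have "0 < \<Delta> / (4 * real N)" using \<Delta>_pos N(1) by simp
  then have "0 < (1/2)^j * Q" using heavy unfolding Q_def by linarith
  then have "0 < Q" by (simp add: zero_less_mult_iff)
  have "0 < l" using \<open>2 < (1 + \<alpha>) / \<alpha>\<close> unfolding l_def by simp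
  then have "ln 2 / (4 * l) \<le> 1 / (2 * real N)"
    using N(1,3) by (simp add: divide_simps)
  then have "\<alpha> / (1 + \<alpha>) * (ln 2 / (4 * l)) \<le> \<alpha> / (1 + \<alpha>) * (1 / (2 * real N))"
    using \<alpha> by (intro mult_left_mono) simp_all
  moreover have "(ln 2 / 4 * \<alpha> / (1 + \<alpha>)) / l = \<alpha> / (1 + \<alpha>) * (ln 2 / (4 * l))"
    by (simp add: algebra_simps)
  ultimately have "(ln 2 / 4 * \<alpha> / (1 + \<alpha>)) / l \<le> \<alpha> / (1 + \<alpha>) * (1 / (2 * real N))"
    by simp
  also have "\<dots> = 2 * \<alpha> / ((1 + \<alpha>) * \<Delta>) * (\<Delta> / (4 * real N))"
    using \<Delta>_pos \<alpha> N(1) by (simp add: divide_simps)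
  also have "\<dots> \<le> 2 * \<alpha> / ((1 + \<alpha>) * \<Delta>) * ((1/2)^j * Q)"
    using heavy \<alpha> \<Delta>_pos unfolding Q_def by (intro mult_left_mono) simp_all
  finally show ?thesis
    using \<open>0 < Q\<close> unfolding Q_def l_def by (intro exI[of _ "(1/2)^j"]) (simp add: ac_simps)
qed

lemma shrink_to_hard_concepts:
  fixes lam mu :: "(nat \<Rightarrow> bool) \<Rightarrow> nat \<times> bool \<Rightarrow> real" and \<pi> :: "(nat \<Rightarrow> bool) \<Rightarrow> real"
  assumes fin: "finite X" "finite C"
    and distrs: "\<forall>c\<in>C. is_distr (sample_space X) (lam c) \<and> is_distr (sample_space X) (mu c)"
    and \<pi>: "is_distr C \<pi>" and realizable: "\<forall>c\<in>C. loss X (mu c) c = 0"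
    and K: "0 \<le> K" "K \<le> 1"
    and Q: "Q = (\<Sum>c\<in>C. if \<tau> \<le> loss X (lam c) c then \<pi> c else 0)" "0 < Q"
  shows "\<exists>lam' \<pi>'. (\<forall>c\<in>C. is_distr (sample_space X) (lam' c)) \<and> is_distr C \<pi>' \<and>
           (\<forall>c\<in>C. \<pi>' c > 0 \<longrightarrow> K * \<tau> * Q \<le> loss X (lam' c) c) \<and>
           gamma2_dual C (sample_space X) (\<lambda>c z. \<pi>' c * (lam' c z - mu c z))
             \<le> K * gamma2_dual C (sample_space X) (\<lambda>c z. \<pi> c * (lam c z - mu c z))"
proof -
  define hard where "hard c \<longleftrightarrow> c \<in> C \<and> \<tau> \<le> loss X (lam c) c" for c
  define t where "t = K * Q"
  define lam' where "lam' c z = (1 - t) * mu c z + t * lam c z" for c z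
  define \<pi>' where "\<pi>' c = (if hard c then \<pi> c / Q else 0)" for c
  have "Q \<le> sum \<pi> C"
    unfolding Q using \<pi> by (intro sum_mono) (auto simp: is_distr_def)
  then have "Q \<le> 1" using \<pi> by (simp add: is_distr_def)
  then have t: "0 \<le> t" "t \<le> 1"
    unfolding t_def using K Q(2) by (simp_all add: mult_le_one)
  have "is_distr (sample_space X) (lam' c)" if "c \<in> C" for c
    unfolding lam'_def using distrs that t by (blast intro: is_distr_mixture)
  moreover have "is_distr C \<pi>'"
    unfolding \<pi>'_def hard_def using is_distr_restrict_normalize[OF \<pi> Q] .
  moreover have "K * \<tau> * Q \<le> loss X (lam' c) c" if "c \<in> C" "\<pi>' c > 0" for c
  proof -
    have "\<tau> \<le> loss X (lam c) c" using that unfolding \<pi>'_def hard_def by (auto split: if_splits)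
    then have "t * \<tau> \<le> t * loss X (lam c) c" using t(1) by (rule mult_left_mono)
    moreover have "loss X (lam' c) c = t * loss X (lam c) c"
      unfolding lam'_def loss_linear using realizable that by simp
    ultimately show ?thesis unfolding t_def by (simp add: ac_simps)
  qed
  moreover have entry:
    "\<pi>' c * (lam' c z - mu c z) = (if hard c then K * (\<pi> c * (lam c z - mu c z)) else 0)" for c z
  proof -
    have "lam' c z - mu c z = K * Q * (lam c z - mu c z)"
      unfolding lam'_def t_def by (simp add: algebra_simps)
    then show ?thesis
      unfolding \<pi>'_def using Q(2) by simp
  qed
  then have "gamma2_dual C (sample_space X) (\<lambda>c z. \<pi>' c * (lam' c z - mu c z))
      \<le> K * gamma2_dual C (sample_space X) (\<lambda>c z. \<pi> c * (lam c z - mu c z))"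
    using gamma2_dual_restrict_rows_scale_le[OF fin(2) finite_sample_space[OF fin(1)] K(1)]
    by (simp only: entry)
  ultimately show ?thesis by blast
qed

lemma hardness_amplification:
  fixes X :: "nat set" and C :: "(nat \<Rightarrow> bool) set" and \<alpha> :: real
    and lam mu :: "(nat \<Rightarrow> bool) \<Rightarrow> nat \<times> bool \<Rightarrow> real" and \<pi> :: "(nat \<Rightarrow> bool) \<Rightarrow> real"
  defines "\<Delta> \<equiv> \<Sum>c\<in>C. \<pi> c * loss X (lam c) c"
  assumes X: "finite X" and CX: "C \<subseteq> concepts X" and \<alpha>: "0 < \<alpha>" "\<alpha> < 1"
    and distrs: "\<forall>c\<in>C. is_distr (sample_space X) (lam c) \<and> is_distr (sample_space X) (mu c)"
    and \<pi>: "is_distr C \<pi>" and hard: "2 * \<alpha> / (1 + \<alpha>) < \<Delta>"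
    and realizable: "\<forall>c\<in>C. loss X (mu c) c = 0"
  shows "\<exists>lam' \<pi>'.
       (\<forall>c\<in>C. is_distr (sample_space X) (lam' c)) \<and> is_distr C \<pi>' \<and>
       (\<forall>c\<in>C. \<pi>' c > 0 \<longrightarrow> loss X (lam' c) c \<ge> (ln 2 / 4 * \<alpha> / (1 + \<alpha>)) / ln ((1 + \<alpha>) / \<alpha>)) \<and>
       gamma2_dual C (sample_space X) (\<lambda>c z. \<pi>' c * (lam' c z - mu c z))
         \<le> 2 * \<alpha> * gamma2_dual C (sample_space X) (\<lambda>c z. \<pi> c * (lam c z - mu c z)) / ((1 + \<alpha>) * \<Delta>)"
proof -
  define K where "K = 2 * \<alpha> / ((1 + \<alpha>) * \<Delta>)"
  have C: "finite C" using finite_concepts[OF X] CX finite_subset by blast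
  have "0 \<le> K" "K \<le> 1"
    using hard \<alpha> unfolding K_def by (simp_all add: field_simps)
  obtain \<tau> where Q: "0 < (\<Sum>c\<in>C. if \<tau> \<le> loss X (lam c) c then \<pi> c else 0)"
    and bound: "(ln 2 / 4 * \<alpha> / (1 + \<alpha>)) / ln ((1 + \<alpha>) / \<alpha>)
                  \<le> K * \<tau> * (\<Sum>c\<in>C. if \<tau> \<le> loss X (lam c) c then \<pi> c else 0)"
    using exists_hard_threshold[OF C \<pi> _ \<alpha> hard[unfolded \<Delta>_def]] distrs loss_nonneg loss_le_one
    unfolding K_def \<Delta>_def by blast
  from shrink_to_hard_concepts[OF X C distrs \<pi> realizable \<open>0 \<le> K\<close> \<open>K \<le> 1\<close> refl Q]
  obtain lam' \<pi>' where "\<forall>c\<in>C. is_distr (sample_space X) (lam' c)" "is_distr C \<pi>'"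
    and "\<forall>c\<in>C. \<pi>' c > 0 \<longrightarrow> K * \<tau> * (\<Sum>c\<in>C. if \<tau> \<le> loss X (lam c) c then \<pi> c else 0)
                                   \<le> loss X (lam' c) c"
    and "gamma2_dual C (sample_space X) (\<lambda>c z. \<pi>' c * (lam' c z - mu c z))
           \<le> K * gamma2_dual C (sample_space X) (\<lambda>c z. \<pi> c * (lam c z - mu c z))"
    by blast
  with bound show ?thesis
    unfolding K_def by (intro exI[of _ lam'] exI[of _ \<pi>']) force
qed

theorem lemma4p4:
  shows "\<exists>C0 > (0::real). \<forall>(X::nat set) (C::(nat \<Rightarrow> bool) set) (\<alpha>::real)
      (lam :: (nat \<Rightarrow> bool) \<Rightarrow> nat \<times> bool \<Rightarrow> real) (mu :: (nat \<Rightarrow> bool) \<Rightarrow> nat \<times> bool \<Rightarrow> real)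
      (\<pi> :: (nat \<Rightarrow> bool) \<Rightarrow> real).
    finite X \<longrightarrow> C \<subseteq> concepts X \<longrightarrow> 0 < \<alpha> \<longrightarrow> \<alpha> < 1 \<longrightarrow>
    (\<forall>c\<in>C. is_distr (sample_space X) (lam c) \<and> is_distr (sample_space X) (mu c)) \<longrightarrow>
    is_distr C \<pi> \<longrightarrow>
    (\<Sum>c\<in>C. \<pi> c * loss X (lam c) c) > 2 * \<alpha> / (1 + \<alpha>) \<longrightarrow>
    (\<forall>c\<in>C. loss X (mu c) c = 0) \<longrightarrow>
    (\<exists>lam' mu' \<pi>'.
       (\<forall>c\<in>C. is_distr (sample_space X) (lam' c) \<and> is_distr (sample_space X) (mu' c)) \<and>
       is_distr C \<pi>' \<and>
       (\<forall>c\<in>C. \<pi>' c > 0 \<longrightarrow> loss X (lam' c) c \<ge> (C0 * \<alpha> / (1 + \<alpha>)) / ln ((1 + \<alpha>) / \<alpha>)) \<and>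
       (\<forall>c\<in>C. loss X (mu' c) c = 0) \<and>
       gamma2_dual C (sample_space X) (\<lambda>c z. \<pi>' c * (lam' c z - mu' c z))
         \<le> 2 * \<alpha> * gamma2_dual C (sample_space X) (\<lambda>c z. \<pi> c * (lam c z - mu c z))
           / ((1 + \<alpha>) * (\<Sum>c\<in>C. \<pi> c * loss X (lam c) c)))"
proof (intro exI[of _ "ln 2 / 4"] conjI allI impI)
  fix X C \<alpha> lam mu \<pi>
  assume "finite X" "C \<subseteq> concepts X" "0 < \<alpha>" "\<alpha> < 1"
    and distrs: "\<forall>c\<in>C. is_distr (sample_space X) (lam c) \<and> is_distr (sample_space X) (mu c)"
    and "is_distr C \<pi>" "2 * \<alpha> / (1 + \<alpha>) < (\<Sum>c\<in>C. \<pi> c * loss X (lam c) c)"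
    and realizable: "\<forall>c\<in>C. loss X (mu c) c = 0"
  from hardness_amplification[OF this] distrs realizable
  show "\<exists>lam' mu' \<pi>'.
       (\<forall>c\<in>C. is_distr (sample_space X) (lam' c) \<and> is_distr (sample_space X) (mu' c)) \<and>
       is_distr C \<pi>' \<and>
       (\<forall>c\<in>C. \<pi>' c > 0 \<longrightarrow> loss X (lam' c) c \<ge> (ln 2 / 4 * \<alpha> / (1 + \<alpha>)) / ln ((1 + \<alpha>) / \<alpha>)) \<and>
       (\<forall>c\<in>C. loss X (mu' c) c = 0) \<and>
       gamma2_dual C (sample_space X) (\<lambda>c z. \<pi>' c * (lam' c z - mu' c z))
         \<le> 2 * \<alpha> * gamma2_dual C (sample_space X) (\<lambda>c z. \<pi> c * (lam c z - mu c z))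
           / ((1 + \<alpha>) * (\<Sum>c\<in>C. \<pi> c * loss X (lam c) c))"
    by blast
qed (simp add: ln_gt_zero)

end
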